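(* There is a constant $C>0$ depending only on $\lambda$ such that for all $n=0,1,2,\dots$ and all $x\in K$, $$|S_{n+1}(x)-S_n(x)|\le C\,a_n.$$
   Context: Fix $(\lambda_n)_{n\ge1}$ and $\lambda$ with $\frac14\le\lambda_n\le\lambda<\frac12$. Starting from $Q_0=[0,1]^2\subset\mathbb{C}$, inductively replace each square of generation $n-1$ by its $4$ axis-parallel corner subsquares of side ratio $\lambda_n$; generation $n$ consists of $4^n$ closed squares of side $s_n=\lambda_1\cdots\lambda_n$ ($s_0=1$), forming the family $\mathcal D_n$. $K=\bigcap_n\bigcup_{Q\in\mathcal D_n}Q$, $\mu$ is the Borel probability measure on $K$ giving mass $4^{-n}$ to each $Q\in\mathcal D_n$, and $a_n=1/(4^ns_n)$. Let $C(z)=1/z$. For $x\in K$ let $Q_n(x)$ be the square of $\mathcal D_n$ containing $x$, $T_n(x)=\int_{K\setminus Q_n(x)}C(x-y)\,d\mu(y)$, and $S_n(x)=\frac{1}{\mu(Q_n(x))}\int_{Q_n(x)}T_n\,d\mu$. *)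

theory Defs
  imports "HOL-Analysis.Analysis"
begin

text \<open>The scale sequence is lam :: nat => real, only lam k for k >= 1 is used.\<close>

definition side :: "(nat \<Rightarrow> real) \<Rightarrow> nat \<Rightarrow> real" where
  "side lam n = (\<Prod>k\<in>{1..n}. lam k)"

definition corners :: "complex set" where
  "corners = {0, 1, \<i>, 1 + \<i>}"

definition llcorner :: "(nat \<Rightarrow> real) \<Rightarrow> nat \<Rightarrow> (nat \<Rightarrow> complex) \<Rightarrow> complex" where
  "llcorner lam n d = (\<Sum>k\<in>{1..n}. complex_of_real (side lam (k - 1) * (1 - lam k)) * d k)"

definition square :: "complex \<Rightarrow> real \<Rightarrow> complex set" where
  "square c r = {z. Re c \<le> Re z \<and> Re z \<le> Re c + r \<and> Im c \<le> Im z \<and> Im z \<le> Im c + r}"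

definition Dgen :: "(nat \<Rightarrow> real) \<Rightarrow> nat \<Rightarrow> complex set set" where
  "Dgen lam n = {square (llcorner lam n d) (side lam n) | d. \<forall>k\<in>{1..n}. d k \<in> corners}"

definition Kset :: "(nat \<Rightarrow> real) \<Rightarrow> complex set" where
  "Kset lam = (\<Inter>n. \<Union>(Dgen lam n))"

definition acoef :: "(nat \<Rightarrow> real) \<Rightarrow> nat \<Rightarrow> real" where
  "acoef lam n = 1 / (4 ^ n * side lam n)"

definition cantor_measure :: "(nat \<Rightarrow> real) \<Rightarrow> complex measure \<Rightarrow> bool" where
  "cantor_measure lam M \<longleftrightarrow> sets M = sets borel \<and> emeasure M (space M) = 1 \<and>
     emeasure M (UNIV - Kset lam) = 0 \<and>
     (\<forall>n. \<forall>Q\<in>Dgen lam n. emeasure M Q = ennreal (1 / 4 ^ n))"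

definition Qn :: "(nat \<Rightarrow> real) \<Rightarrow> nat \<Rightarrow> complex \<Rightarrow> complex set" where
  "Qn lam n x = (THE Q. Q \<in> Dgen lam n \<and> x \<in> Q)"

definition Tn :: "(nat \<Rightarrow> real) \<Rightarrow> complex measure \<Rightarrow> nat \<Rightarrow> complex \<Rightarrow> complex" where
  "Tn lam M n x = set_lebesgue_integral M (Kset lam - Qn lam n x) (\<lambda>y. 1 / (x - y))"

definition Sn :: "(nat \<Rightarrow> real) \<Rightarrow> complex measure \<Rightarrow> nat \<Rightarrow> complex \<Rightarrow> complex" where
  "Sn lam M n x = set_lebesgue_integral M (Qn lam n x) (Tn lam M n)
                   / complex_of_real (measure M (Qn lam n x))"

end

theory Submission
  imports Defs
begin

text \<open>
  Fix \<open>x \<in> K\<close> with squares \<open>Q m = Q\<^sub>m(x)\<close> and put \<open>\<delta> m = s m (1 - 2\<lambda>)\<close>. Sibling squares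
  of generation \<open>j\<close> are at distance at least \<open>s (j - 1) (1 - 2\<lambda>\<^sub>j) \<ge> \<delta> (j - 1)\<close> from each other.
  Hence, for \<open>N \<in> {n, n + 1}\<close> and \<open>w \<in> Q N\<close>, the integrands of \<open>T\<^sub>N(w)\<close> and \<open>T\<^sub>n(x)\<close> differ
  by at most \<open>1 / \<delta> n\<close> on \<open>Q n\<close>, and, via \<open>|1/(w - y) - 1/(x - y)| \<le> |w - x| / \<delta> m\<^sup>2\<close>, by at
  most \<open>2 s n / \<delta> m\<^sup>2\<close> on \<open>Q m - Q (m + 1)\<close> for \<open>m < n\<close>. As \<open>\<mu> (Q m) = 4\<^sup>-\<^sup>m\<close> and
  \<open>s n \<le> \<lambda>\<^sup>n\<^sup>-\<^sup>m s m\<close>, this majorant integrates to at most \<open>B a\<^sub>n\<close>, where \<open>B\<close> contains a geometric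
  series in \<open>4\<lambda>\<^sup>2 < 1\<close>. So \<open>|T\<^sub>N(w) - T\<^sub>n(x)| \<le> B a\<^sub>n\<close>; averaging over \<open>w \<in> Q N\<close> gives
  \<open>|S\<^sub>N(x) - T\<^sub>n(x)| \<le> B a\<^sub>n\<close> for both values of \<open>N\<close>, and the claim follows with \<open>C = 2B\<close>.
\<close>

lemma norm_one_divide_le:
  fixes z :: "'a::real_normed_field"
  assumes "r \<le> norm z" "0 < r"
  shows "norm (1 / z) \<le> 1 / r"
  using assms by (simp add: norm_divide frac_le)

lemma norm_one_divide_diff_le:
  fixes w x y :: "'a::real_normed_field"
  assumes w: "r \<le> norm (w - y)" and x: "r \<le> norm (x - y)" and r: "0 < r"
  shows "norm (1 / (w - y) - 1 / (x - y)) \<le> norm (x - w) / r\<^sup>2"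
proof -
  have "w - y \<noteq> 0" "x - y \<noteq> 0" using w x r by auto
  then have "1 / (w - y) - 1 / (x - y) = (x - w) / ((w - y) * (x - y))"
    by (simp add: field_simps)
  then have eq: "norm (1 / (w - y) - 1 / (x - y)) = norm (x - w) / (norm (w - y) * norm (x - y))"
    by (simp add: norm_divide norm_mult)
  have "r\<^sup>2 \<le> norm (w - y) * norm (x - y)"
    unfolding power2_eq_square using w x r by (intro mult_mono) auto
  then show ?thesis unfolding eq using r by (intro frac_le) auto
qed

lemma sum_power_diff_le:
  fixes q :: real
  assumes "0 \<le> q" "q < 1"
  shows "(\<Sum>m<N. q ^ (N - m)) \<le> q / (1 - q)"
proof (induction N)
  case 0 then show ?case using assms by simp
next
  case (Suc N)
  have "(\<Sum>m<Suc N. q ^ (Suc N - m)) = q * (\<Sum>m<N. q ^ (N - m)) + q"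
    unfolding sum_distrib_left by (simp add: Suc_diff_le)
  also have "\<dots> \<le> q * (q / (1 - q)) + q"
    using Suc assms by (intro add_right_mono mult_left_mono) auto
  also have "\<dots> = q / (1 - q)" using assms by (simp add: field_simps)
  finally show ?case .
qed

lemma first_difference:
  fixes d e :: "nat \<Rightarrow> 'a"
  assumes "\<not> (\<forall>k\<in>{1..N}. d k = e k)"
  obtains j where "1 \<le> j" "j \<le> N" "d j \<noteq> e j" "\<And>k. 1 \<le> k \<Longrightarrow> k < j \<Longrightarrow> d k = e k"
proof -
  define P where "P k \<longleftrightarrow> 1 \<le> k \<and> k \<le> N \<and> d k \<noteq> e k" for k
  obtain j where "P j" and least: "\<And>k. k < j \<Longrightarrow> \<not> P k"
    using assms exists_least_iff[of P] by (auto simp: P_def)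
  then show ?thesis using that by (auto simp: P_def)
qed

lemma square_diam:
  assumes "a \<in> square c r" "b \<in> square c r"
  shows "cmod (a - b) \<le> 2 * r"
proof -
  have "\<bar>Re (a - b)\<bar> \<le> r" "\<bar>Im (a - b)\<bar> \<le> r" using assms by (auto simp: square_def)
  then show ?thesis using cmod_le[of "a - b"] by linarith
qed

lemma closed_square: "closed (square c r)"
proof -
  have "square c r = {z. Re c \<le> Re z} \<inter> {z. Re z \<le> Re c + r} \<inter> {z. Im c \<le> Im z} \<inter> {z. Im z \<le> Im c + r}"
    by (auto simp: square_def)
  then show ?thesis
    by (simp add: closed_Int closed_halfspace_Re_ge closed_halfspace_Re_le
        closed_halfspace_Im_ge closed_halfspace_Im_le)
qed

lemma (in finite_measure) set_average_dist_le:
  fixes g :: "'a \<Rightarrow> 'b::{real_normed_field, banach, second_countable_topology}"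
  assumes Q: "Q \<in> sets M" "0 < measure M Q" and g: "g \<in> borel_measurable M"
    and close: "\<And>z. z \<in> Q \<Longrightarrow> norm (g z - c) \<le> B"
  shows "norm (set_lebesgue_integral M Q g / of_real (measure M Q) - c) \<le> B"
proof -
  obtain z where "z \<in> Q" using Q by (metis empty_iff equals0I measure_empty less_irrefl)
  then have B: "0 \<le> B" using close norm_ge_zero order_trans by blast
  have int_diff: "set_integrable M Q (\<lambda>z. g z - c)"
    unfolding set_integrable_def
  proof (rule integrable_const_bound[where B=B])
    show "AE z in M. norm (indicator Q z *\<^sub>R (g z - c)) \<le> B"
      using close B by (intro AE_I2) (auto simp: indicator_def)
  qed (use Q g in measurable)
  have int_const: "set_integrable M Q (\<lambda>_. c)"
    unfolding set_integrable_def using Q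
    by (intro integrable_scaleR_left integrable_real_indicator) (auto simp: less_top[symmetric])
  have "set_lebesgue_integral M Q g = set_lebesgue_integral M Q (\<lambda>z. g z - c) + measure M Q *\<^sub>R c"
    using set_integral_add(2)[OF int_diff int_const] set_integral_const[of Q M c] Q by simp
  then have eq: "set_lebesgue_integral M Q g / of_real (measure M Q) - c
      = set_lebesgue_integral M Q (\<lambda>z. g z - c) / of_real (measure M Q)"
    using Q by (simp add: field_simps scaleR_conv_of_real)
  have "norm (set_lebesgue_integral M Q (\<lambda>z. g z - c)) \<le> set_lebesgue_integral M Q (\<lambda>z. norm (g z - c))"
    using int_diff by (rule set_integral_norm_bound)
  also have "\<dots> \<le> set_lebesgue_integral M Q (\<lambda>_. B)"
  proof (rule set_integral_mono)
    show "set_integrable M Q (\<lambda>z. norm (g z - c))"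
      using int_diff unfolding set_integrable_def by (auto dest: integrable_norm)
    show "set_integrable M Q (\<lambda>_. B)"
      unfolding set_integrable_def using Q
      by (intro integrable_scaleR_left integrable_real_indicator) (auto simp: less_top[symmetric])
  qed (rule close)
  also have "\<dots> = measure M Q * B" using Q by (simp add: set_integral_const)
  finally show ?thesis unfolding eq using Q by (simp add: norm_divide divide_le_eq mult.commute)
qed

locale cantor_set =
  fixes lam :: "nat \<Rightarrow> real" and lam0 :: real
  assumes lam_bounds: "\<And>k. 1 \<le> k \<Longrightarrow> 0 < lam k \<and> lam k \<le> lam0"
    and lam0_less: "lam0 < 1/2"
begin

abbreviation "s \<equiv> side lam"

lemma lam_pos: "1 \<le> k \<Longrightarrow> 0 < lam k"
  using lam_bounds[of k] by linarith

lemma lam_le: "1 \<le> k \<Longrightarrow> lam k \<le> lam0"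
  using lam_bounds[of k] by linarith

lemma lam_less_half: "1 \<le> k \<Longrightarrow> lam k < 1/2"
  using lam_le lam0_less by fastforce

lemma lam0_pos: "0 < lam0"
  using lam_bounds[of 1] by linarith

lemma side_Suc: "s (Suc n) = s n * lam (Suc n)"
  unfolding side_def by (simp add: prod.nat_ivl_Suc' mult.commute)

lemma side_pos: "0 < s n"
  by (induction n) (auto simp: side_def side_Suc lam_pos)

lemma side_antimono: "m \<le> n \<Longrightarrow> s n \<le> s m"
proof (induction n rule: dec_induct)
  case (step n)
  have "s (Suc n) \<le> s n"
    using side_pos[of n] lam_less_half[of "Suc n"] by (simp add: side_Suc mult_left_le)
  with step show ?case by linarith
qed simp

lemma side_le_power: "m \<le> n \<Longrightarrow> s n \<le> lam0 ^ (n - m) * s m"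
proof (induction n rule: dec_induct)
  case (step n)
  have "s (Suc n) = s n * lam (Suc n)" by (rule side_Suc)
  also have "\<dots> \<le> (lam0 ^ (n - m) * s m) * lam0"
    using step side_pos[of n] lam_le[of "Suc n"] lam_pos[of "Suc n"] by (intro mult_mono) auto
  also have "\<dots> = lam0 ^ (Suc n - m) * s m"
    using step(1) by (simp add: Suc_diff_le)
  finally show ?case .
qed simp

text \<open>One real coordinate of the lower-left corner of a square, for digits \<open>b k \<in> {0, 1}\<close>.\<close>

definition offset :: "nat \<Rightarrow> (nat \<Rightarrow> real) \<Rightarrow> real" where
  "offset N b = (\<Sum>k\<in>{1..N}. s (k - 1) * (1 - lam k) * b k)"

lemma offset_Suc: "offset (Suc N) b = offset N b + s N * (1 - lam (Suc N)) * b (Suc N)"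
  unfolding offset_def by (simp add: sum.nat_ivl_Suc')

lemma offset_cong: "(\<And>k. 1 \<le> k \<Longrightarrow> k \<le> N \<Longrightarrow> b k = b' k) \<Longrightarrow> offset N b = offset N b'"
  unfolding offset_def by (intro sum.cong) auto

lemma offset_nested:
  assumes "m \<le> N" "\<forall>k\<in>{1..N}. b k \<in> {0, 1}"
  shows "offset m b \<le> offset N b \<and> offset N b + s N \<le> offset m b + s m"
  using assms
proof (induction N rule: dec_induct)
  case (step n)
  have "b (Suc n) \<in> {0, 1}" using step by auto
  then have "offset n b \<le> offset (Suc n) b \<and> offset (Suc n) b + s (Suc n) \<le> offset n b + s n"
    using lam_pos[of "Suc n"] lam_less_half[of "Suc n"] side_pos[of n]
    unfolding offset_Suc side_Suc by (auto simp: algebra_simps)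
  with step show ?case by auto
qed simp

definition gap :: "nat \<Rightarrow> real" where
  "gap j = s (j - 1) * (1 - 2 * lam j)"

definition min_gap :: "nat \<Rightarrow> real" where
  "min_gap m = s m * (1 - 2 * lam0)"

lemma gap_pos: "1 \<le> j \<Longrightarrow> 0 < gap j"
  using side_pos lam_less_half[of j] by (simp add: gap_def)

lemma min_gap_pos: "0 < min_gap m"
  using side_pos lam0_less by (simp add: min_gap_def)

lemma min_gap_le_gap: "1 \<le> j \<Longrightarrow> min_gap (j - 1) \<le> gap j"
  using side_pos[of "j - 1"] lam_le[of j] unfolding gap_def min_gap_def
  by (intro mult_left_mono) auto

lemma min_gap_antimono: "m \<le> n \<Longrightarrow> min_gap n \<le> min_gap m"
  using side_antimono lam0_less unfolding min_gap_def by (intro mult_right_mono) auto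

lemma shell_term_le:
  assumes "m < n"
  shows "(1 / 4 ^ m) * (2 * s n / (min_gap m)\<^sup>2)
    \<le> 2 / (1 - 2 * lam0)\<^sup>2 * acoef lam n * (4 * lam0\<^sup>2) ^ (n - m)"
proof -
  define k where "k = n - m"
  have nk: "n = m + k" using assms k_def by simp
  have sm: "0 < s m" and sn: "0 < s n" using side_pos by auto
  have "s n * s n \<le> (lam0 ^ k * s m) * (lam0 ^ k * s m)"
    using side_le_power[of m n] nk sn by (intro mult_mono) auto
  then have "4 ^ n * (s n * s n) \<le> 4 ^ n * ((lam0 ^ k * s m) * (lam0 ^ k * s m))"
    by simp
  also have "\<dots> = (4 * lam0\<^sup>2) ^ k * 4 ^ m * (s m)\<^sup>2"
    by (simp add: nk power_add power_mult_distrib power2_eq_square algebra_simps flip: power_mult)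
  finally have "4 ^ n * (s n * s n) \<le> (4 * lam0\<^sup>2) ^ k * 4 ^ m * (s m)\<^sup>2" .
  then show ?thesis using sm sn lam0_less
    unfolding min_gap_def acoef_def k_def[symmetric]
    by (simp add: divide_simps power_mult_distrib) (simp add: algebra_simps power2_eq_square)
qed

lemma offset_separation:
  assumes b: "\<forall>k\<in>{1..N}. b k \<in> {0, 1}" and b': "\<forall>k\<in>{1..N'}. b' k \<in> {0, 1}"
    and j: "1 \<le> j" "j \<le> N" "j \<le> N'"
    and agree: "\<And>k. 1 \<le> k \<Longrightarrow> k < j \<Longrightarrow> b k = b' k" and differ: "b j \<noteq> b' j"
    and t: "offset N b \<le> t" "t \<le> offset N b + s N"
    and t': "offset N' b' \<le> t'" "t' \<le> offset N' b' + s N'"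
  shows "gap j \<le> \<bar>t - t'\<bar>"
proof -
  obtain i where i: "j = Suc i" using j by (cases j) auto
  have "offset j b \<le> t" "t \<le> offset j b + s j"
    using offset_nested[OF j(2) b] t by auto
  moreover have "offset j b' \<le> t'" "t' \<le> offset j b' + s j"
    using offset_nested[OF j(3) b'] t' by auto
  moreover have "offset i b = offset i b'"
    using agree i by (intro offset_cong) auto
  moreover have "b j \<in> {0, 1}" "b' j \<in> {0, 1}" using b b' j by auto
  ultimately show ?thesis using differ
    unfolding gap_def i offset_Suc side_Suc
    by (auto simp: algebra_simps abs_if split: if_splits)
qed

definition admissible :: "nat \<Rightarrow> (nat \<Rightarrow> complex) \<Rightarrow> bool" where
  "admissible N d \<longleftrightarrow> (\<forall>k\<in>{1..N}. d k \<in> corners)"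

definition sq :: "nat \<Rightarrow> (nat \<Rightarrow> complex) \<Rightarrow> complex set" where
  "sq N d = square (llcorner lam N d) (s N)"

lemma admissible_mono: "admissible N d \<Longrightarrow> m \<le> N \<Longrightarrow> admissible m d"
  by (auto simp: admissible_def)

lemma admissible_Re_Im:
  assumes "admissible N d"
  shows "\<forall>k\<in>{1..N}. Re (d k) \<in> {0, 1}" "\<forall>k\<in>{1..N}. Im (d k) \<in> {0, 1}"
  using assms by (auto simp: admissible_def corners_def)

lemma mem_sq_iff: "z \<in> sq N d \<longleftrightarrow>
   offset N (\<lambda>k. Re (d k)) \<le> Re z \<and> Re z \<le> offset N (\<lambda>k. Re (d k)) + s N \<and>
   offset N (\<lambda>k. Im (d k)) \<le> Im z \<and> Im z \<le> offset N (\<lambda>k. Im (d k)) + s N"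
  by (simp add: sq_def square_def llcorner_def offset_def Re_sum Im_sum)

lemma sq_cong: "(\<And>k. 1 \<le> k \<Longrightarrow> k \<le> N \<Longrightarrow> d k = e k) \<Longrightarrow> sq N d = sq N e"
  unfolding sq_def llcorner_def by (metis (no_types, lifting) atLeastAtMost_iff sum.cong)

lemma sq_nested: "admissible N d \<Longrightarrow> m \<le> N \<Longrightarrow> sq N d \<subseteq> sq m d"
  using offset_nested[OF _ admissible_Re_Im(1)] offset_nested[OF _ admissible_Re_Im(2)]
  by (fastforce simp: mem_sq_iff)

lemma sq_separation:
  assumes d: "admissible N d" and e: "admissible N' e"
    and j: "1 \<le> j" "j \<le> N" "j \<le> N'"
    and agree: "\<And>k. 1 \<le> k \<Longrightarrow> k < j \<Longrightarrow> d k = e k" and differ: "d j \<noteq> e j"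
    and z: "z \<in> sq N d" and y: "y \<in> sq N' e"
  shows "gap j \<le> cmod (z - y)"
proof -
  have "Re (d j) \<noteq> Re (e j) \<or> Im (d j) \<noteq> Im (e j)" using differ complex_eq_iff by blast
  then show ?thesis
  proof
    assume "Re (d j) \<noteq> Re (e j)"
    then have "gap j \<le> \<bar>Re z - Re y\<bar>"
      using z y agree
      by (intro offset_separation[OF admissible_Re_Im(1)[OF d] admissible_Re_Im(1)[OF e] j])
        (auto simp: mem_sq_iff)
    then show ?thesis using abs_Re_le_cmod[of "z - y"] by simp
  next
    assume "Im (d j) \<noteq> Im (e j)"
    then have "gap j \<le> \<bar>Im z - Im y\<bar>"
      using z y agree
      by (intro offset_separation[OF admissible_Re_Im(2)[OF d] admissible_Re_Im(2)[OF e] j])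
        (auto simp: mem_sq_iff)
    then show ?thesis using abs_Im_le_cmod[of "z - y"] by simp
  qed
qed

lemma sq_unique:
  assumes "admissible N d" "admissible N e" "z \<in> sq N d" "z \<in> sq N e"
  shows "sq N e = sq N d"
proof (cases "\<forall>k\<in>{1..N}. d k = e k")
  case True
  then show ?thesis by (intro sq_cong) auto
next
  case False
  then obtain j where j: "1 \<le> j" "j \<le> N" "d j \<noteq> e j" "\<And>k. 1 \<le> k \<Longrightarrow> k < j \<Longrightarrow> d k = e k"
    using first_difference by blast
  have "gap j \<le> cmod (z - z)"
    using j assms by (intro sq_separation[of N d N e j]) auto
  with gap_pos[OF j(1)] show ?thesis by simp
qed

lemma mem_Dgen_iff: "Q \<in> Dgen lam N \<longleftrightarrow> (\<exists>d. admissible N d \<and> Q = sq N d)"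
  by (auto simp: Dgen_def admissible_def sq_def)

lemma Qn_eq_sq:
  assumes "admissible N d" "z \<in> sq N d"
  shows "Qn lam N z = sq N d"
  unfolding Qn_def
proof (rule the_equality)
  fix Q assume "Q \<in> Dgen lam N \<and> z \<in> Q"
  then obtain e where "admissible N e" "Q = sq N e" "z \<in> sq N e" by (auto simp: mem_Dgen_iff)
  then show "Q = sq N d" using sq_unique[OF assms(1)] assms(2) by auto
qed (use assms in \<open>auto simp: mem_Dgen_iff\<close>)

lemma Kset_obtain_sq:
  assumes "x \<in> Kset lam"
  obtains d where "admissible N d" "x \<in> sq N d"
  using assms mem_Dgen_iff unfolding Kset_def by blast

lemma Kset_exit_sq:
  assumes d: "admissible N d" and y: "y \<in> Kset lam" "y \<notin> sq N d"
  obtains j where "1 \<le> j" "j \<le> N" "y \<in> sq (j - 1) d" "y \<notin> sq j d"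
    "\<And>w. w \<in> sq j d \<Longrightarrow> gap j \<le> cmod (w - y)"
proof -
  obtain e where e: "admissible N e" "y \<in> sq N e" using Kset_obtain_sq[OF y(1)] .
  have "\<not> (\<forall>k\<in>{1..N}. d k = e k)"
  proof
    assume "\<forall>k\<in>{1..N}. d k = e k"
    then have "sq N d = sq N e" by (intro sq_cong) auto
    with e y(2) show False by simp
  qed
  then obtain j where j: "1 \<le> j" "j \<le> N" "d j \<noteq> e j" "\<And>k. 1 \<le> k \<Longrightarrow> k < j \<Longrightarrow> d k = e k"
    using first_difference by blast
  have "j - 1 \<le> N" using j by simp
  then have "y \<in> sq (j - 1) e" using sq_nested[OF e(1)] e(2) by blast
  moreover have "sq (j - 1) e = sq (j - 1) d" using j by (intro sq_cong) auto
  moreover have far: "gap j \<le> cmod (w - y)" if "w \<in> sq j d" for w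
    using j e d that by (intro sq_separation[of j d N e j]) (auto intro: admissible_mono)
  moreover have "y \<notin> sq j d" using far[of y] gap_pos[OF j(1)] by auto
  ultimately show ?thesis using that j by auto
qed

lemma finite_Dgen: "finite (Dgen lam N)"
proof -
  have "Dgen lam N \<subseteq> (\<lambda>d. sq N d) ` (Pi\<^sub>E {1..N} (\<lambda>_. corners))"
  proof
    fix Q assume "Q \<in> Dgen lam N"
    then obtain d where d: "admissible N d" "Q = sq N d" by (auto simp: mem_Dgen_iff)
    then have "Q = sq N (restrict d {1..N})" using sq_cong[of N d "restrict d {1..N}"] by simp
    moreover have "restrict d {1..N} \<in> Pi\<^sub>E {1..N} (\<lambda>_. corners)"
      using d by (auto simp: admissible_def)
    ultimately show "Q \<in> (\<lambda>d. sq N d) ` (Pi\<^sub>E {1..N} (\<lambda>_. corners))" by blast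
  qed
  moreover have "finite (Pi\<^sub>E {1..N} (\<lambda>_. corners))"
    by (intro finite_PiE) (auto simp: corners_def)
  ultimately show ?thesis by (meson finite_imageI finite_subset)
qed

lemma closed_Kset: "closed (Kset lam)"
  unfolding Kset_def
  by (intro closed_INT ballI closed_Union finite_Dgen) (auto simp: mem_Dgen_iff sq_def closed_square)

end

definition dominator_bound :: "real \<Rightarrow> real" where
  "dominator_bound l = 1 / (1 - 2 * l) + 2 * (4 * l\<^sup>2) / ((1 - 2 * l)\<^sup>2 * (1 - 4 * l\<^sup>2))"

locale cantor_measure_space = cantor_set +
  fixes M :: "complex measure"
  assumes cantor_measure: "cantor_measure lam M"
begin

lemma sets_M [measurable_cong]: "sets M = sets borel"
  using cantor_measure by (simp add: cantor_measure_def)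

lemma space_M [simp]: "space M = UNIV"
  using sets_eq_imp_space_eq[OF sets_M] by simp

sublocale finite_measure M
  using cantor_measure by (intro finite_measureI) (simp add: cantor_measure_def)

lemma sets_sq [measurable]: "sq N d \<in> sets M"
  using closed_square sets_M by (simp add: sq_def)

lemma sets_Kset [measurable]: "Kset lam \<in> sets M"
  using closed_Kset sets_M by simp

lemma measure_sq:
  assumes "admissible N d"
  shows "measure M (sq N d) = 1 / 4 ^ N"
proof -
  have "sq N d \<in> Dgen lam N" using assms by (auto simp: mem_Dgen_iff)
  then show ?thesis using cantor_measure by (simp add: cantor_measure_def measure_def)
qed

lemma measurable_integral_kernel:
  assumes "E \<in> sets M"
  shows "(\<lambda>z. \<integral>y. indicator E y *\<^sub>R (1 / (z - y)) \<partial>M :: complex) \<in> borel_measurable M"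
proof -
  have "(\<lambda>(z, y). indicator E y *\<^sub>R (1 / (z - y)) :: complex) \<in> borel_measurable (M \<Otimes>\<^sub>M M)"
    using assms by measurable
  then show ?thesis by (rule borel_measurable_lebesgue_integral)
qed

end

text \<open>The nested squares \<open>sq m d\<close>, \<open>m \<le> n + 1\<close>, are the squares \<open>Q\<^sub>m(x)\<close> of the point \<open>x\<close>.\<close>

locale cantor_point = cantor_measure_space +
  fixes x :: complex and n :: nat and d :: "nat \<Rightarrow> complex"
  assumes admissible_d: "admissible (Suc n) d" and x_mem: "x \<in> sq (Suc n) d"
begin

definition kernel :: "nat \<Rightarrow> complex \<Rightarrow> complex \<Rightarrow> complex" where
  "kernel N w y = indicator (Kset lam - sq N d) y *\<^sub>R (1 / (w - y))"

definition dominator :: "complex \<Rightarrow> real" where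
  "dominator y = indicator (sq n d) y / min_gap n
     + (\<Sum>m<n. indicator (sq m d) y * (2 * s n / (min_gap m)\<^sup>2))"

lemma admissible_le: "N \<le> Suc n \<Longrightarrow> admissible N d"
  using admissible_d admissible_mono by blast

lemma sq_nested_le: "m \<le> N \<Longrightarrow> N \<le> Suc n \<Longrightarrow> sq N d \<subseteq> sq m d"
  using sq_nested admissible_le by blast

lemma x_mem_sq: "m \<le> Suc n \<Longrightarrow> x \<in> sq m d"
  using sq_nested_le[of m "Suc n"] x_mem by auto

lemma shell_coeff_nonneg: "0 \<le> 2 * s n / (min_gap m)\<^sup>2"
  using min_gap_pos side_pos[of n] by (simp add: less_imp_le)

lemma dominator_ge_inner: "y \<in> sq n d \<Longrightarrow> 1 / min_gap n \<le> dominator y"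
  using shell_coeff_nonneg unfolding dominator_def
  by (simp add: sum_nonneg del: times_divide_eq_right)

lemma dominator_ge_shell:
  assumes "m < n" "y \<in> sq m d"
  shows "2 * s n / (min_gap m)\<^sup>2 \<le> dominator y"
proof -
  have "2 * s n / (min_gap m)\<^sup>2 = indicator (sq m d) y * (2 * s n / (min_gap m)\<^sup>2)"
    using assms by simp
  also have "\<dots> \<le> (\<Sum>m<n. indicator (sq m d) y * (2 * s n / (min_gap m)\<^sup>2))"
    using assms shell_coeff_nonneg
    by (intro member_le_sum) (auto simp del: times_divide_eq_right)
  also have "\<dots> \<le> dominator y"
    unfolding dominator_def using min_gap_pos[of n] by simp
  finally show ?thesis .
qed

lemma dominator_nonneg: "0 \<le> dominator y"
  using min_gap_pos[of n] shell_coeff_nonneg unfolding dominator_def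
  by (intro add_nonneg_nonneg sum_nonneg mult_nonneg_nonneg) (auto simp del: times_divide_eq_right)

lemma kernel_bound:
  assumes N: "N \<le> Suc n" and w: "w \<in> sq N d"
  shows "cmod (kernel N w y) \<le> 1 / min_gap N"
proof (cases "y \<in> Kset lam - sq N d")
  case False
  then show ?thesis using min_gap_pos[of N] by (simp add: kernel_def)
next
  case True
  then obtain j where j: "1 \<le> j" "j \<le> N" and far: "\<And>w. w \<in> sq j d \<Longrightarrow> gap j \<le> cmod (w - y)"
    using Kset_exit_sq[OF admissible_le[OF N]] by blast
  have "min_gap N \<le> gap j"
    using min_gap_antimono[of "j - 1" N] min_gap_le_gap[OF j(1)] j by linarith
  also have "gap j \<le> cmod (w - y)"
    using far sq_nested_le[OF j(2) N] w by blast
  finally have "cmod (1 / (w - y)) \<le> 1 / min_gap N"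
    using min_gap_pos by (rule norm_one_divide_le)
  then show ?thesis using True by (simp add: kernel_def)
qed

lemma integrable_kernel:
  assumes "N \<le> Suc n" "w \<in> sq N d"
  shows "integrable M (kernel N w)"
  unfolding kernel_def
  by (rule integrable_const_bound[where B = "1 / min_gap N"])
    (use kernel_bound[OF assms] in \<open>auto simp: kernel_def\<close>)

lemma inverse_diff_le_shell:
  assumes j: "1 \<le> j" "j \<le> n" and w: "w \<in> sq n d"
    and far: "\<And>v. v \<in> sq j d \<Longrightarrow> gap j \<le> cmod (v - y)"
  shows "cmod (1 / (w - y) - 1 / (x - y)) \<le> 2 * s n / (min_gap (j - 1))\<^sup>2"
proof -
  have "w \<in> sq j d" "x \<in> sq j d"
    using sq_nested_le[of j n] j w x_mem_sq[of j] by auto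
  then have "min_gap (j - 1) \<le> cmod (w - y)" "min_gap (j - 1) \<le> cmod (x - y)"
    using far min_gap_le_gap[OF j(1)] order_trans by blast+
  then have "cmod (1 / (w - y) - 1 / (x - y)) \<le> cmod (x - w) / (min_gap (j - 1))\<^sup>2"
    using min_gap_pos by (rule norm_one_divide_diff_le)
  also have "\<dots> \<le> 2 * s n / (min_gap (j - 1))\<^sup>2"
    using square_diam[of x "llcorner lam n d" "s n" w] x_mem_sq[of n] w
    by (intro divide_right_mono) (auto simp: sq_def)
  finally show ?thesis .
qed

lemma kernel_diff_le_dominator:
  assumes N: "N = n \<or> N = Suc n" and w: "w \<in> sq N d"
  shows "cmod (kernel N w y - kernel n x y) \<le> dominator y"
proof (cases "y \<in> Kset lam - sq N d")
  case False
  moreover have "sq N d \<subseteq> sq n d" using N sq_nested_le[of n N] by auto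
  ultimately show ?thesis using dominator_nonneg by (auto simp: kernel_def)
next
  case y: True
  then obtain j where j: "1 \<le> j" "j \<le> N" "y \<in> sq (j - 1) d" "y \<notin> sq j d"
    and far: "\<And>w. w \<in> sq j d \<Longrightarrow> gap j \<le> cmod (w - y)"
    using Kset_exit_sq[OF admissible_le] N by (metis Diff_iff le_Suc_eq order_refl)
  show ?thesis
  proof (cases "j \<le> n")
    case True
    have "y \<notin> sq n d" using sq_nested_le[OF True] j(4) by auto
    then have "kernel N w y - kernel n x y = 1 / (w - y) - 1 / (x - y)"
      using y by (simp add: kernel_def)
    moreover have "w \<in> sq n d" using w N sq_nested_le[of n N] by auto
    ultimately have "cmod (kernel N w y - kernel n x y) \<le> 2 * s n / (min_gap (j - 1))\<^sup>2"
      using inverse_diff_le_shell[OF j(1) True _ far] by simp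
    also have "\<dots> \<le> dominator y"
      using True j by (intro dominator_ge_shell) auto
    finally show ?thesis .
  next
    case False
    then have "j = Suc n" "N = Suc n" using j N by auto
    then have "kernel N w y - kernel n x y = 1 / (w - y)" "y \<in> sq n d"
      using y j(3) by (auto simp: kernel_def)
    moreover have "min_gap n \<le> cmod (w - y)"
      using far[OF w[unfolded \<open>N = Suc n\<close>, folded \<open>j = Suc n\<close>]]
        min_gap_le_gap[OF j(1)] \<open>j = Suc n\<close> by simp
    ultimately show ?thesis
      using norm_one_divide_le[OF _ min_gap_pos] dominator_ge_inner order_trans by metis
  qed
qed

lemma integrable_dominator: "integrable M dominator"
  unfolding dominator_def
  by (intro Bochner_Integration.integrable_add Bochner_Integration.integrable_sum
      integrable_mult_left integrable_divide_zero integrable_real_indicator)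
    (auto simp: less_top[symmetric])

lemma integral_dominator:
  "integral\<^sup>L M dominator = (1 / 4 ^ n) / min_gap n + (\<Sum>m<n. (1 / 4 ^ m) * (2 * s n / (min_gap m)\<^sup>2))"
  using measure_sq admissible_le unfolding dominator_def
  by (subst Bochner_Integration.integral_add Bochner_Integration.integral_sum;
      auto intro!: Bochner_Integration.integrable_sum integrable_mult_left integrable_real_indicator
        simp: less_top[symmetric])+

lemma integral_dominator_le: "integral\<^sup>L M dominator \<le> dominator_bound lam0 * acoef lam n"
proof -
  define q where "q = 4 * lam0\<^sup>2"
  have "lam0 * lam0 < 1/2 * (1/2)"
    using lam0_pos lam0_less by (intro mult_strict_mono) auto
  then have q: "0 \<le> q" "q < 1" by (auto simp: q_def power2_eq_square)
  have "(\<Sum>m<n. (1 / 4 ^ m) * (2 * s n / (min_gap m)\<^sup>2))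
      \<le> (\<Sum>m<n. 2 / (1 - 2 * lam0)\<^sup>2 * acoef lam n * q ^ (n - m))"
    unfolding q_def by (intro sum_mono shell_term_le) auto
  also have "\<dots> = 2 / (1 - 2 * lam0)\<^sup>2 * acoef lam n * (\<Sum>m<n. q ^ (n - m))"
    by (simp add: sum_distrib_left)
  also have "\<dots> \<le> 2 / (1 - 2 * lam0)\<^sup>2 * acoef lam n * (q / (1 - q))"
    using sum_power_diff_le[OF q] side_pos[of n] by (intro mult_left_mono) (auto simp: acoef_def)
  moreover have "(1 / 4 ^ n) / min_gap n = acoef lam n / (1 - 2 * lam0)"
    by (simp add: acoef_def min_gap_def)
  ultimately have "integral\<^sup>L M dominator
      \<le> acoef lam n / (1 - 2 * lam0) + 2 / (1 - 2 * lam0)\<^sup>2 * acoef lam n * (q / (1 - q))"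
    unfolding integral_dominator by linarith
  also have "\<dots> = dominator_bound lam0 * acoef lam n"
    unfolding dominator_bound_def q_def[symmetric] by (simp add: field_simps)
  finally show ?thesis .
qed

lemma Tn_eq_integral_kernel:
  assumes "N \<le> Suc n" "z \<in> sq N d"
  shows "Tn lam M N z = integral\<^sup>L M (kernel N z)"
  using Qn_eq_sq[OF admissible_le assms(2)] assms(1)
  by (simp add: Tn_def set_lebesgue_integral_def kernel_def[abs_def])

lemma Tn_dist_le:
  assumes N: "N = n \<or> N = Suc n" and w: "w \<in> sq N d"
  shows "cmod (Tn lam M N w - Tn lam M n x) \<le> dominator_bound lam0 * acoef lam n"
proof -
  have N_le: "N \<le> Suc n" using N by auto
  have int_w: "integrable M (kernel N w)" using integrable_kernel[OF N_le w] .
  have int_x: "integrable M (kernel n x)" using integrable_kernel[of n x] x_mem_sq[of n] by auto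
  have "Tn lam M N w - Tn lam M n x = (\<integral>y. kernel N w y - kernel n x y \<partial>M)"
    using Tn_eq_integral_kernel[OF N_le w] Tn_eq_integral_kernel[of n x] x_mem_sq[of n] int_w int_x
    by simp
  also have "cmod \<dots> \<le> integral\<^sup>L M dominator"
    using int_w int_x integrable_dominator kernel_diff_le_dominator[OF N w]
    by (intro Bochner_Integration.integral_norm_bound_integral) auto
  finally show ?thesis using integral_dominator_le by linarith
qed

lemma Sn_dist_Tn_le:
  assumes N: "N = n \<or> N = Suc n"
  shows "cmod (Sn lam M N x - Tn lam M n x) \<le> dominator_bound lam0 * acoef lam n"
proof -
  have N_le: "N \<le> Suc n" using N by auto
  have Q: "Qn lam N x = sq N d" using Qn_eq_sq[OF admissible_le[OF N_le] x_mem_sq[OF N_le]] .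
  have "set_lebesgue_integral M (sq N d) (Tn lam M N)
      = set_lebesgue_integral M (sq N d) (\<lambda>z. integral\<^sup>L M (kernel N z))"
    using Tn_eq_integral_kernel[OF N_le] by (intro set_lebesgue_integral_cong) auto
  then have "Sn lam M N x = set_lebesgue_integral M (sq N d) (\<lambda>z. integral\<^sup>L M (kernel N z))
      / complex_of_real (measure M (sq N d))"
    by (simp add: Sn_def Q)
  also have "cmod (\<dots> - Tn lam M n x) \<le> dominator_bound lam0 * acoef lam n"
  proof (rule set_average_dist_le)
    show "0 < measure M (sq N d)" using measure_sq[OF admissible_le[OF N_le]] by simp
    show "(\<lambda>z. integral\<^sup>L M (kernel N z)) \<in> borel_measurable M"
      unfolding kernel_def by (rule measurable_integral_kernel) simp
  qed (use Tn_dist_le[OF N] Tn_eq_integral_kernel[OF N_le] in auto)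
  finally show ?thesis .
qed

lemma Sn_Suc_dist_le:
  "cmod (Sn lam M (Suc n) x - Sn lam M n x) \<le> 2 * dominator_bound lam0 * acoef lam n"
  using norm_triangle_ineq4[of "Sn lam M (Suc n) x - Tn lam M n x" "Sn lam M n x - Tn lam M n x"]
    Sn_dist_Tn_le[of "Suc n"] Sn_dist_Tn_le[of n]
  by simp

end

lemma dominator_bound_pos:
  assumes "0 \<le> l" "l < 1/2"
  shows "0 < dominator_bound l"
proof -
  have "l * l < 1/2 * (1/2)" using assms by (intro mult_strict_mono) auto
  then show ?thesis using assms unfolding dominator_bound_def
    by (intro add_pos_nonneg divide_nonneg_pos) (auto simp: power2_eq_square)
qed

theorem lemma2p2:
  fixes lam0 :: real
  assumes "1/4 \<le> lam0" and "lam0 < 1/2"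
  shows "\<exists>C>0. \<forall>(lam :: nat \<Rightarrow> real) (M :: complex measure).
           (\<forall>k\<ge>1. 1/4 \<le> lam k \<and> lam k \<le> lam0) \<longrightarrow> cantor_measure lam M \<longrightarrow>
           (\<forall>n x. x \<in> Kset lam \<longrightarrow>
              cmod (Sn lam M (Suc n) x - Sn lam M n x) \<le> C * acoef lam n)"
proof (intro exI[of _ "2 * dominator_bound lam0"] conjI allI impI)
  show "0 < 2 * dominator_bound lam0" using assms dominator_bound_pos by simp
next
  fix lam :: "nat \<Rightarrow> real" and M :: "complex measure" and n x
  assume "\<forall>k\<ge>1. 1/4 \<le> lam k \<and> lam k \<le> lam0" "cantor_measure lam M" "x \<in> Kset lam"
  then interpret cantor_measure_space lam lam0 M
    using assms by unfold_locales force+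
  obtain d where "admissible (Suc n) d" "x \<in> sq (Suc n) d"
    using Kset_obtain_sq[OF \<open>x \<in> Kset lam\<close>] .
  then interpret cantor_point lam lam0 M x n d
    by unfold_locales
  show "cmod (Sn lam M (Suc n) x - Sn lam M n x) \<le> 2 * dominator_bound lam0 * acoef lam n"
    by (rule Sn_Suc_dist_le)
qed

end
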